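(* Let $L_1$ and $L_2$ be ladders in the triangular lattice with $n_1$ and $n_2$ vertices respectively, where $n_1>n_2>1$. Then $$2^{n_1-n_2}\,\tau(L_2)\ \le\ \tau(L_1)\ \le\ 3^{n_1-n_2}\,\tau(L_2).$$
   Context: The triangular lattice is the infinite planar graph whose vertices are the points $a(1,0)+b(1/2,\sqrt3/2)$, $a,b\in\mathbb Z$, with edges between points at distance 1. A ladder is the induced subgraph of the triangular lattice on the vertices of two consecutive segments lying on two adjacent parallel lattice lines, such that each endpoint of one segment is adjacent to an endpoint of the other segment. Equivalently, a ladder with $s$ vertices is isomorphic to the graph on $v_1,\dots,v_s$ with edges $v_iv_{i+1}$ and $v_iv_{i+2}$ (the square of a path). $\tau(H)$ denotes the number of spanning trees of $H$. *)

theory Defs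
  imports Main
begin

definition adj_rel :: "'a set set \<Rightarrow> ('a \<times> 'a) set" where
  "adj_rel T = {(u, v). {u, v} \<in> T \<and> u \<noteq> v}"

definition connected_via :: "'a set \<Rightarrow> 'a set set \<Rightarrow> bool" where
  "connected_via V T \<longleftrightarrow> (\<forall>u\<in>V. \<forall>v\<in>V. (u, v) \<in> (adj_rel T)\<^sup>*)"

definition has_cycle :: "'a set set \<Rightarrow> bool" where
  "has_cycle T \<longleftrightarrow> (\<exists>xs. length xs \<ge> 3 \<and> distinct xs \<and>
      (\<forall>i < length xs. {xs ! i, xs ! ((i + 1) mod length xs)} \<in> T))"

definition spanning_tree :: "'a set \<Rightarrow> 'a set set \<Rightarrow> 'a set set \<Rightarrow> bool" where
  "spanning_tree V E T \<longleftrightarrow> T \<subseteq> E \<and> connected_via V T \<and> \<not> has_cycle T"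

definition num_spanning_trees :: "'a set \<Rightarrow> 'a set set \<Rightarrow> nat" where
  "num_spanning_trees V E = card {T. spanning_tree V E T}"

text \<open>The ladder with s vertices: the square of the path v_0,...,v_{s-1}.\<close>
definition ladder_vertices :: "nat \<Rightarrow> nat set" where
  "ladder_vertices s = {..<s}"

definition ladder_edges :: "nat \<Rightarrow> nat set set" where
  "ladder_edges s = {{i, j} | i j. i < s \<and> j < s \<and> (j = i + 1 \<or> j = i + 2)}"

definition tau_ladder :: "nat \<Rightarrow> nat" where
  "tau_ladder s = num_spanning_trees (ladder_vertices s) (ladder_edges s)"

end

theory Submission
  imports Defs
begin

(* Vertex n of the ladder on n + 1 vertices has exactly the neighbours n - 1 and n - 2.
   Attaching n as a leaf to n - 1 or to n - 2 embeds two disjoint copies of the spanning trees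
   of the ladder on n vertices, so tau (n + 1) >= 2 tau n.  Conversely, a spanning tree either
   uses exactly one edge at n, and then n is a leaf whose deletion leaves a spanning tree of the
   smaller ladder, or it uses both, and then replacing them by the edge {n - 1, n - 2} (which
   the tree cannot contain, as it would close a triangle) again gives such a spanning tree.
   These three maps are injective, so tau (n + 1) <= 3 tau n, and the theorem follows by
   induction on n1 - n2. *)

definition is_tree :: "'a set \<Rightarrow> 'a set set \<Rightarrow> bool" where
  "is_tree V T \<longleftrightarrow> connected_via V T \<and> \<not> has_cycle T"

lemma spanning_tree_iff: "spanning_tree V E T \<longleftrightarrow> T \<subseteq> E \<and> is_tree V T"
  by (auto simp: spanning_tree_def is_tree_def)

definition cycle_edge :: "'a list \<Rightarrow> nat \<Rightarrow> 'a set" where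
  "cycle_edge xs i = {xs ! i, xs ! ((i + 1) mod length xs)}"

definition is_cycle :: "'a set set \<Rightarrow> 'a list \<Rightarrow> bool" where
  "is_cycle T xs \<longleftrightarrow> length xs \<ge> 3 \<and> distinct xs \<and> (\<forall>i < length xs. cycle_edge xs i \<in> T)"

lemma has_cycle_iff: "has_cycle T \<longleftrightarrow> (\<exists>xs. is_cycle T xs)"
  unfolding has_cycle_def is_cycle_def cycle_edge_def ..

lemma is_cycle_mono: "is_cycle T xs \<Longrightarrow> T \<subseteq> T' \<Longrightarrow> is_cycle T' xs"
  unfolding is_cycle_def by blast

lemma has_cycle_mono: "has_cycle T \<Longrightarrow> T \<subseteq> T' \<Longrightarrow> has_cycle T'"
  using is_cycle_mono by (metis has_cycle_iff)

lemma cycle_edge_rotate: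
  assumes "i < length xs"
  shows "cycle_edge (rotate k xs) i = cycle_edge xs ((k + i) mod length xs)"
proof -
  let ?L = "length xs"
  have "(k + (i + 1) mod ?L) mod ?L = ((k + i) mod ?L + 1) mod ?L"
    by (metis add.assoc mod_add_left_eq mod_add_right_eq)
  moreover have "(i + 1) mod ?L < ?L" using assms by (intro mod_less_divisor) linarith
  ultimately show ?thesis
    using assms by (simp add: cycle_edge_def nth_rotate)
qed

lemma cycle_edge_last:
  assumes "xs \<noteq> []"
  shows "cycle_edge xs (length xs - 1) = {last xs, hd xs}"
  using assms by (simp add: cycle_edge_def last_conv_nth hd_conv_nth)

lemma cycle_edge_inj:
  assumes cyc: "is_cycle T xs" and i: "i < length xs" and j: "j < length xs"
    and eq: "cycle_edge xs i = cycle_edge xs j"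
  shows "i = j"
proof (rule ccontr)
  assume "i \<noteq> j"
  let ?L = "length xs"
  have L: "?L \<ge> 3" and d: "distinct xs" using cyc by (auto simp: is_cycle_def)
  have si: "(i + 1) mod ?L < ?L" and sj: "(j + 1) mod ?L < ?L"
    using i by (intro mod_less_divisor; linarith)+
  have "xs ! i \<noteq> xs ! j" using d i j \<open>i \<noteq> j\<close> by (simp add: nth_eq_iff_index_eq)
  then have "xs ! i = xs ! ((j + 1) mod ?L)" "xs ! ((i + 1) mod ?L) = xs ! j"
    using eq unfolding cycle_edge_def doubleton_eq_iff by blast+
  then have i_succ: "(j + 1) mod ?L = i" and j_succ: "(i + 1) mod ?L = j"
    using d i j si sj by (simp_all add: nth_eq_iff_index_eq)
  have "j + 1 < ?L \<or> j + 1 = ?L" using j by linarith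
  then show False
  proof
    assume "j + 1 < ?L"
    then have "i = j + 1" using i_succ by simp
    then have j_eq: "(j + 2) mod ?L = j" using j_succ by (simp add: add.assoc)
    show False
    proof (cases "j + 2 < ?L")
      case True
      then show False using j_eq by simp
    next
      case False
      then have "j + 2 = ?L" using \<open>j + 1 < ?L\<close> by linarith
      then show False using j_eq L by simp
    qed
  next
    assume "j + 1 = ?L"
    then have "i = 0" using i_succ by simp
    then have "j = 1" using j_succ L by simp
    then show False using \<open>j + 1 = ?L\<close> L by simp
  qed
qed

lemma is_cycle_rotate:
  assumes "is_cycle T xs"
  shows "is_cycle T (rotate k xs)"
proof -
  have "(k + i) mod length xs < length xs" if "i < length xs" for i
    using that by (intro mod_less_divisor) linarith
  then show ?thesis using assms by (simp add: is_cycle_def cycle_edge_rotate)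
qed

lemma has_cycle_triangle:
  assumes "{a, b} \<in> T" "{b, c} \<in> T" "{c, a} \<in> T" "distinct [a, b, c]"
  shows "has_cycle T"
proof -
  have "is_cycle T [a, b, c]"
    using assms by (auto simp: is_cycle_def cycle_edge_def less_Suc_eq)
  then show ?thesis by (auto simp: has_cycle_iff)
qed

lemma is_cycle_vertex_degree:
  assumes cyc: "is_cycle T xs" and v: "v \<in> set xs"
  obtains e1 e2 where "e1 \<in> T" "e2 \<in> T" "e1 \<noteq> e2" "v \<in> e1" "v \<in> e2"
proof -
  let ?L = "length xs"
  obtain i where i: "i < ?L" "xs ! i = v" using v by (auto simp: in_set_conv_nth)
  define p where "p = (if i = 0 then ?L - 1 else i - 1)"
  have p: "p < ?L" "p \<noteq> i" "(p + 1) mod ?L = i"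
    using i cyc by (auto simp: p_def is_cycle_def)
  have "cycle_edge xs i \<noteq> cycle_edge xs p"
    using cycle_edge_inj[OF cyc i(1) p(1)] p(2) by blast
  moreover have "cycle_edge xs i \<in> T" "cycle_edge xs p \<in> T"
    using cyc i p by (auto simp: is_cycle_def)
  moreover have "v \<in> cycle_edge xs i" "v \<in> cycle_edge xs p"
    using i p by (auto simp: cycle_edge_def)
  ultimately show ?thesis using that by blast
qed

lemma has_cycle_insertD:
  assumes "has_cycle (insert e T)" "\<not> has_cycle T"
  obtains ys where "is_cycle (insert e T) ys" "{last ys, hd ys} = e"
proof -
  obtain xs where cyc: "is_cycle (insert e T) xs" using assms(1) by (auto simp: has_cycle_iff)
  let ?L = "length xs"
  obtain i where i: "i < ?L" "cycle_edge xs i = e"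
  proof (rule ccontr)
    assume "\<not> thesis"
    then have "is_cycle T xs" using cyc that by (auto simp: is_cycle_def)
    then show False using assms(2) by (auto simp: has_cycle_iff)
  qed
  define ys where "ys = rotate (Suc i) xs"
  have L: "?L \<ge> 3" using cyc by (simp add: is_cycle_def)
  have "Suc i + (?L - 1) = i + ?L" using L by linarith
  then have "(Suc i + (?L - 1)) mod ?L = i" using i(1) by simp
  have "cycle_edge ys (?L - 1) = cycle_edge xs ((Suc i + (?L - 1)) mod ?L)"
    unfolding ys_def by (rule cycle_edge_rotate) (use L in linarith)
  also have "\<dots> = e" using \<open>(Suc i + (?L - 1)) mod ?L = i\<close> i(2) by (simp only:)
  finally have "cycle_edge ys (?L - 1) = e" .
  moreover have "ys \<noteq> []" "length ys = ?L" using L by (auto simp: ys_def)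
  ultimately have "{last ys, hd ys} = e" by (metis cycle_edge_last)
  moreover have "is_cycle (insert e T) ys" unfolding ys_def using cyc by (rule is_cycle_rotate)
  ultimately show ?thesis using that by blast
qed

lemma is_cycle_subdivide:
  assumes cyc: "is_cycle (insert {a, b} T) ys" and closing: "{last ys, hd ys} = {a, b}"
    and x: "x \<notin> set ys" and ax: "{a, x} \<in> T" and bx: "{b, x} \<in> T"
  shows "is_cycle T (ys @ [x])"
proof -
  let ?L = "length ys"
  have L: "?L \<ge> 3" and d: "distinct ys" using cyc by (auto simp: is_cycle_def)
  have "ys \<noteq> []" using L by auto
  then have closing_edge: "cycle_edge ys (?L - 1) = {a, b}"
    using closing by (metis cycle_edge_last)
  have "cycle_edge (ys @ [x]) j \<in> T" if j: "j \<le> ?L" for j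
  proof -
    consider "j < ?L - 1" | "j = ?L - 1" | "j = ?L" using j by linarith
    then show ?thesis
    proof cases
      case 1
      have "cycle_edge ys j \<noteq> {a, b}"
        using cycle_edge_inj[OF cyc, of j "?L - 1"] closing_edge 1 L by fastforce
      moreover have "cycle_edge ys j \<in> insert {a, b} T" using cyc 1 by (simp add: is_cycle_def)
      ultimately have "cycle_edge ys j \<in> T" by simp
      moreover have "cycle_edge (ys @ [x]) j = cycle_edge ys j"
        using 1 by (auto simp: cycle_edge_def nth_append)
      ultimately show ?thesis by simp
    next
      case 2
      have "last ys = a \<or> last ys = b" using closing by (auto simp: doubleton_eq_iff)
      moreover have "cycle_edge (ys @ [x]) j = {last ys, x}"
      proof -
        have "Suc j = ?L" using 2 L by linarith
        then show ?thesis using \<open>ys \<noteq> []\<close> 2 by (simp add: cycle_edge_def nth_append last_conv_nth)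
      qed
      ultimately show ?thesis using ax bx by auto
    next
      case 3
      have "hd ys = a \<or> hd ys = b" using closing by (auto simp: doubleton_eq_iff)
      moreover have "cycle_edge (ys @ [x]) j = {x, hd ys}"
        using 3 \<open>ys \<noteq> []\<close> by (simp add: cycle_edge_def nth_append hd_conv_nth)
      ultimately show ?thesis using ax bx by (auto simp: insert_commute)
    qed
  qed
  then show ?thesis using L d x by (auto simp: is_cycle_def)
qed

lemma rtrancl_adj_rel_mono: "T \<subseteq> T' \<Longrightarrow> (adj_rel T)\<^sup>* \<subseteq> (adj_rel T')\<^sup>*"
  by (intro rtrancl_mono) (auto simp: adj_rel_def)

lemma rtrancl_adj_rel_edge:
  assumes "(u, v) \<in> (adj_rel T)\<^sup>*" "u \<noteq> v"
  obtains w where "{u, w} \<in> T" "u \<noteq> w"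
  using assms by (cases rule: converse_rtranclE) (auto simp: adj_rel_def)

text \<open>A walk through x enters and leaves it via two neighbours of x; the detour is replaced
  by the link between these neighbours.\<close>
lemma rtrancl_adj_rel_bypass:
  assumes walk: "(u, v) \<in> (adj_rel T)\<^sup>*" and "u \<noteq> x" "v \<noteq> x"
    and keep: "{e \<in> T. x \<notin> e} \<subseteq> T'"
    and link: "\<And>a b. {a, x} \<in> T \<Longrightarrow> {b, x} \<in> T \<Longrightarrow> a \<noteq> x \<Longrightarrow> b \<noteq> x \<Longrightarrow>
      (a, b) \<in> (adj_rel T')\<^sup>*"
  shows "(u, v) \<in> (adj_rel T')\<^sup>*"
proof -
  have "(v \<noteq> x \<longrightarrow> (u, v) \<in> (adj_rel T')\<^sup>*) \<and>
        (v = x \<longrightarrow> (\<exists>a. {a, x} \<in> T \<and> a \<noteq> x \<and> (u, a) \<in> (adj_rel T')\<^sup>*))"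
    using walk
  proof (induction rule: rtrancl_induct)
    case base
    then show ?case using \<open>u \<noteq> x\<close> by simp
  next
    case (step v w)
    then have vw: "{v, w} \<in> T" "v \<noteq> w" by (auto simp: adj_rel_def)
    consider "v \<noteq> x" "w \<noteq> x" | "w = x" | "v = x" by blast
    then show ?case
    proof cases
      case 1
      then have "(v, w) \<in> adj_rel T'" using vw keep by (auto simp: adj_rel_def)
      then show ?thesis using step.IH 1 by auto
    next
      case 2
      then show ?thesis using step.IH vw by auto
    next
      case 3
      then obtain a where a: "{a, x} \<in> T" "a \<noteq> x" "(u, a) \<in> (adj_rel T')\<^sup>*"
        using step.IH by auto
      have "(a, w) \<in> (adj_rel T')\<^sup>*"
        using link[OF a(1) _ a(2)] vw 3 by (simp add: insert_commute)
      then show ?thesis using a(3) 3 vw by auto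
    qed
  qed
  then show ?thesis using \<open>v \<noteq> x\<close> by simp
qed

lemma connected_via_delete_vertex:
  assumes conn: "connected_via (insert x V) T" and x: "x \<notin> V"
    and keep: "{e \<in> T. x \<notin> e} \<subseteq> T'"
    and link: "\<And>a b. {a, x} \<in> T \<Longrightarrow> {b, x} \<in> T \<Longrightarrow> a \<noteq> x \<Longrightarrow> b \<noteq> x \<Longrightarrow>
      (a, b) \<in> (adj_rel T')\<^sup>*"
  shows "connected_via V T'"
  unfolding connected_via_def
proof (intro ballI)
  fix u v assume "u \<in> V" "v \<in> V"
  then have "(u, v) \<in> (adj_rel T)\<^sup>*" "u \<noteq> x" "v \<noteq> x"
    using conn x by (auto simp: connected_via_def)
  then show "(u, v) \<in> (adj_rel T')\<^sup>*" using keep link by (rule rtrancl_adj_rel_bypass)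
qed

lemma is_tree_insert_leaf:
  assumes tree: "is_tree V T" and x: "x \<notin> V" "x \<notin> \<Union>T" and y: "y \<in> V"
  shows "is_tree (insert x V) (insert {y, x} T)"
  unfolding is_tree_def
proof
  let ?T = "insert {y, x} T"
  have xy: "(x, y) \<in> adj_rel ?T" "(y, x) \<in> adj_rel ?T"
    using x y by (auto simp: adj_rel_def insert_commute)
  have to_y: "(u, y) \<in> (adj_rel ?T)\<^sup>*" "(y, u) \<in> (adj_rel ?T)\<^sup>*" if "u \<in> insert x V" for u
  proof -
    have "(u, y) \<in> (adj_rel T)\<^sup>* \<and> (y, u) \<in> (adj_rel T)\<^sup>*" if "u \<in> V"
      using tree that y by (simp add: is_tree_def connected_via_def)
    then show "(u, y) \<in> (adj_rel ?T)\<^sup>*" "(y, u) \<in> (adj_rel ?T)\<^sup>*"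
      using \<open>u \<in> insert x V\<close> xy rtrancl_adj_rel_mono[of T ?T] by auto
  qed
  show "connected_via (insert x V) ?T"
    unfolding connected_via_def by (meson to_y rtrancl_trans)
  show "\<not> has_cycle ?T"
  proof
    assume "has_cycle ?T"
    moreover have "\<not> has_cycle T" using tree by (simp add: is_tree_def)
    ultimately obtain ys where cyc: "is_cycle ?T ys" and closing: "{last ys, hd ys} = {y, x}"
      by (rule has_cycle_insertD)
    have "ys \<noteq> []" using cyc by (auto simp: is_cycle_def)
    then have "x \<in> set ys" using closing by (auto simp: doubleton_eq_iff)
    then obtain e1 e2 where "e1 \<in> ?T" "e2 \<in> ?T" "e1 \<noteq> e2" "x \<in> e1" "x \<in> e2"
      by (rule is_cycle_vertex_degree[OF cyc])
    then show False using x(2) by blast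
  qed
qed

lemma is_tree_delete_leaf:
  assumes tree: "is_tree (insert x V) T" and x: "x \<notin> V"
    and leaf: "\<And>e. e \<in> T \<Longrightarrow> x \<in> e \<Longrightarrow> e = {y, x}"
  shows "is_tree V (T - {{y, x}})"
proof -
  have "connected_via V (T - {{y, x}})"
  proof (rule connected_via_delete_vertex[OF _ x])
    show "connected_via (insert x V) T" using tree by (simp add: is_tree_def)
    fix c d assume "{c, x} \<in> T" "{d, x} \<in> T" "c \<noteq> x" "d \<noteq> x"
    then have "c = y" "d = y" using leaf by (auto simp: doubleton_eq_iff)
    then show "(c, d) \<in> (adj_rel (T - {{y, x}}))\<^sup>*" by simp
  qed blast
  moreover have "\<not> has_cycle (T - {{y, x}})"
    using tree has_cycle_mono by (auto simp: is_tree_def)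
  ultimately show ?thesis by (simp add: is_tree_def)
qed

lemma is_tree_suppress_vertex:
  assumes tree: "is_tree (insert x V) T" and x: "x \<notin> V"
    and a: "a \<in> V" and b: "b \<in> V" and ab: "a \<noteq> b"
    and ax: "{a, x} \<in> T" and bx: "{b, x} \<in> T"
    and deg: "\<And>e. e \<in> T \<Longrightarrow> x \<in> e \<Longrightarrow> e = {a, x} \<or> e = {b, x}"
  shows "is_tree V (insert {a, b} (T - {{a, x}, {b, x}}))"
proof -
  let ?S = "insert {a, b} (T - {{a, x}, {b, x}})"
  have "a \<noteq> x" "b \<noteq> x" using a b x by auto
  have "connected_via V ?S"
  proof (rule connected_via_delete_vertex[OF _ x])
    show "connected_via (insert x V) T" using tree by (simp add: is_tree_def)
    fix c d assume "{c, x} \<in> T" "{d, x} \<in> T" "c \<noteq> x" "d \<noteq> x"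
    then have "c \<in> {a, b}" "d \<in> {a, b}" using deg by (auto simp: doubleton_eq_iff)
    moreover have "(a, b) \<in> adj_rel ?S" "(b, a) \<in> adj_rel ?S"
      using ab by (auto simp: adj_rel_def insert_commute)
    ultimately show "(c, d) \<in> (adj_rel ?S)\<^sup>*" by auto
  qed blast
  moreover have "\<not> has_cycle ?S"
  proof
    assume "has_cycle ?S"
    moreover have acyclic: "\<not> has_cycle T" using tree by (simp add: is_tree_def)
    then have "\<not> has_cycle (T - {{a, x}, {b, x}})" using has_cycle_mono by blast
    ultimately obtain ys where cyc: "is_cycle ?S ys" and closing: "{last ys, hd ys} = {a, b}"
      by (rule has_cycle_insertD)
    have "x \<notin> set ys"
    proof
      assume "x \<in> set ys"
      then obtain e where "e \<in> ?S" "x \<in> e" by (rule is_cycle_vertex_degree[OF cyc])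
      then show False using deg \<open>a \<noteq> x\<close> \<open>b \<noteq> x\<close> by auto
    qed
    moreover have "is_cycle (insert {a, b} T) ys" using cyc is_cycle_mono by blast
    ultimately have "is_cycle T (ys @ [x])" using closing ax bx by (intro is_cycle_subdivide)
    then show False using acyclic by (auto simp: has_cycle_iff)
  qed
  ultimately show ?thesis by (simp add: is_tree_def)
qed

abbreviation ladder_trees :: "nat \<Rightarrow> nat set set set" where
  "ladder_trees n \<equiv> {T. spanning_tree (ladder_vertices n) (ladder_edges n) T}"

lemma tau_ladder_eq_card: "tau_ladder n = card (ladder_trees n)"
  by (simp add: tau_ladder_def num_spanning_trees_def)

lemma ladder_vertices_Suc: "ladder_vertices (Suc n) = insert n (ladder_vertices n)"
  by (auto simp: ladder_vertices_def)

lemma ladder_edges_bound: "e \<in> ladder_edges n \<Longrightarrow> v \<in> e \<Longrightarrow> v < n"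
  by (auto simp: ladder_edges_def)

lemma ladder_edgeI: "j < n \<Longrightarrow> i < j \<Longrightarrow> j \<le> i + 2 \<Longrightarrow> {i, j} \<in> ladder_edges n"
  unfolding ladder_edges_def by (intro CollectI exI[of _ i] exI[of _ j]) auto

lemma ladder_edges_Suc:
  assumes "2 \<le> n"
  shows "ladder_edges (Suc n) = insert {n - 1, n} (insert {n - 2, n} (ladder_edges n))"
proof (intro equalityI subsetI)
  fix e assume "e \<in> ladder_edges (Suc n)"
  then obtain i j where e: "e = {i, j}" "i < Suc n" "j < Suc n" "j = i + 1 \<or> j = i + 2"
    unfolding ladder_edges_def by blast
  show "e \<in> insert {n - 1, n} (insert {n - 2, n} (ladder_edges n))"
  proof (cases "j < n")
    case True
    then have "i < n" using e(4) by linarith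
    then have "e \<in> ladder_edges n" using e True unfolding ladder_edges_def by blast
    then show ?thesis by blast
  next
    case False
    then have "j = n" "i = n - 1 \<or> i = n - 2" using e(3,4) by linarith+
    then show ?thesis using e(1) by blast
  qed
next
  fix e assume e: "e \<in> insert {n - 1, n} (insert {n - 2, n} (ladder_edges n))"
  have "{n - 1, n} \<in> ladder_edges (Suc n)" "{n - 2, n} \<in> ladder_edges (Suc n)"
    using assms by (intro ladder_edgeI; linarith)+
  moreover have "ladder_edges n \<subseteq> ladder_edges (Suc n)"
    unfolding ladder_edges_def by fastforce
  ultimately show "e \<in> ladder_edges (Suc n)" using e by blast
qed

lemma finite_ladder_trees: "finite (ladder_trees n)"
proof -
  have "ladder_edges n \<subseteq> (\<lambda>(i, j). {i, j}) ` ({..<n} \<times> {..<n})"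
    unfolding ladder_edges_def by auto
  then have "finite (ladder_edges n)" by (rule finite_subset) auto
  moreover have "ladder_trees n \<subseteq> Pow (ladder_edges n)" by (auto simp: spanning_tree_def)
  ultimately show ?thesis by (meson finite_Pow_iff finite_subset)
qed

lemma ladder_tree_SucD:
  assumes n: "2 \<le> n" and T: "T \<in> ladder_trees (Suc n)"
  shows "T \<subseteq> insert {n - 1, n} (insert {n - 2, n} (ladder_edges n))"
    and "is_tree (insert n (ladder_vertices n)) T"
    and "\<And>e. e \<in> T \<Longrightarrow> n \<in> e \<Longrightarrow> e = {n - 1, n} \<or> e = {n - 2, n}"
    and "{n - 1, n} \<in> T \<and> (\<forall>e\<in>T. n \<in> e \<longrightarrow> e = {n - 1, n}) \<or>
         {n - 2, n} \<in> T \<and> (\<forall>e\<in>T. n \<in> e \<longrightarrow> e = {n - 2, n}) \<or>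
         {n - 1, n} \<in> T \<and> {n - 2, n} \<in> T"
proof -
  show sub: "T \<subseteq> insert {n - 1, n} (insert {n - 2, n} (ladder_edges n))"
    and tree: "is_tree (insert n (ladder_vertices n)) T"
    using T by (simp_all add: spanning_tree_iff ladder_edges_Suc[OF n] ladder_vertices_Suc)
  show at_n: "e = {n - 1, n} \<or> e = {n - 2, n}" if "e \<in> T" "n \<in> e" for e
    using that sub ladder_edges_bound[of e n n] by blast
  have "n \<in> insert n (ladder_vertices n)" "n - 1 \<in> insert n (ladder_vertices n)"
    using n by (auto simp: ladder_vertices_def)
  then have "(n, n - 1) \<in> (adj_rel T)\<^sup>*"
    using tree unfolding is_tree_def connected_via_def by blast
  moreover have "n \<noteq> n - 1" using n by simp
  ultimately obtain w where "{n, w} \<in> T" by (rule rtrancl_adj_rel_edge)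
  then have "{n - 1, n} \<in> T \<or> {n - 2, n} \<in> T" using at_n by fastforce
  then show "{n - 1, n} \<in> T \<and> (\<forall>e\<in>T. n \<in> e \<longrightarrow> e = {n - 1, n}) \<or>
      {n - 2, n} \<in> T \<and> (\<forall>e\<in>T. n \<in> e \<longrightarrow> e = {n - 2, n}) \<or>
      {n - 1, n} \<in> T \<and> {n - 2, n} \<in> T"
    using at_n by blast
qed

lemma ladder_tree_insert_leaf:
  assumes n: "2 \<le> n" and S: "S \<in> ladder_trees n" and y: "y = n - 1 \<or> y = n - 2"
  shows "insert {y, n} S \<in> ladder_trees (Suc n)"
proof -
  have sub: "S \<subseteq> ladder_edges n" and tree: "is_tree (ladder_vertices n) S"
    using S by (auto simp: spanning_tree_iff)
  have "n \<notin> \<Union>S" using sub ladder_edges_bound by blast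
  moreover have "y \<in> ladder_vertices n" "n \<notin> ladder_vertices n"
    using y n by (auto simp: ladder_vertices_def)
  ultimately have "is_tree (ladder_vertices (Suc n)) (insert {y, n} S)"
    unfolding ladder_vertices_Suc using tree by (intro is_tree_insert_leaf)
  moreover have "insert {y, n} S \<subseteq> ladder_edges (Suc n)"
    using sub y ladder_edges_Suc[OF n] by auto
  ultimately show ?thesis by (simp add: spanning_tree_iff)
qed

lemma ladder_tree_delete_leaf:
  assumes n: "2 \<le> n" and T: "T \<in> ladder_trees (Suc n)"
    and leaf: "\<And>e. e \<in> T \<Longrightarrow> n \<in> e \<Longrightarrow> e = {y, n}"
  shows "T - {{y, n}} \<in> ladder_trees n"
proof -
  have "n \<notin> ladder_vertices n" by (simp add: ladder_vertices_def)
  with ladder_tree_SucD(2)[OF n T] have "is_tree (ladder_vertices n) (T - {{y, n}})"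
    using leaf by (rule is_tree_delete_leaf)
  moreover have "T - {{y, n}} \<subseteq> ladder_edges n"
    using ladder_tree_SucD(1)[OF n T] leaf by auto
  ultimately show ?thesis by (simp add: spanning_tree_iff)
qed

lemma ladder_tree_suppress_last:
  assumes n: "2 \<le> n" and T: "T \<in> ladder_trees (Suc n)"
    and e1: "{n - 1, n} \<in> T" and e2: "{n - 2, n} \<in> T"
  shows "insert {n - 1, n - 2} (T - {{n - 1, n}, {n - 2, n}}) \<in> ladder_trees n"
proof -
  have "n \<notin> ladder_vertices n" "n - 1 \<in> ladder_vertices n" "n - 2 \<in> ladder_vertices n"
    "n - 1 \<noteq> n - 2"
    using n by (auto simp: ladder_vertices_def)
  then have "is_tree (ladder_vertices n) (insert {n - 1, n - 2} (T - {{n - 1, n}, {n - 2, n}}))"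
    using ladder_tree_SucD(2,3)[OF n T] e1 e2 by (intro is_tree_suppress_vertex) auto
  moreover have "{n - 2, n - 1} \<in> ladder_edges n" using n by (intro ladder_edgeI) auto
  then have "insert {n - 1, n - 2} (T - {{n - 1, n}, {n - 2, n}}) \<subseteq> ladder_edges n"
    using ladder_tree_SucD(1)[OF n T] by (auto simp: insert_commute)
  ultimately show ?thesis by (simp add: spanning_tree_iff)
qed

lemma tau_ladder_Suc_ge:
  assumes n: "2 \<le> n"
  shows "2 * tau_ladder n \<le> tau_ladder (Suc n)"
proof -
  let ?A = "insert {n - 1, n} ` ladder_trees n" and ?B = "insert {n - 2, n} ` ladder_trees n"
  have fresh: "{y, n} \<notin> S" if "S \<in> ladder_trees n" for S y
    using that ladder_edges_bound[of "{y, n}" n n] by (auto simp: spanning_tree_def)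
  have inj: "inj_on (insert {y, n}) (ladder_trees n)" for y
    by (rule inj_on_inverseI[where g = "\<lambda>T. T - {{y, n}}"]) (use fresh in auto)
  have "{n - 1, n} \<noteq> {n - 2, n}" using n by (auto simp: doubleton_eq_iff)
  then have "?A \<inter> ?B = {}" using fresh by blast
  then have "card (?A \<union> ?B) = 2 * tau_ladder n"
    using finite_ladder_trees inj by (simp add: card_Un_disjoint card_image tau_ladder_eq_card)
  moreover have "?A \<union> ?B \<subseteq> ladder_trees (Suc n)" using ladder_tree_insert_leaf[OF n] by blast
  ultimately show ?thesis
    using card_mono[OF finite_ladder_trees] by (metis tau_ladder_eq_card)
qed

lemma card_ladder_trees_leaf_le:
  assumes n: "2 \<le> n"
  shows "card {T \<in> ladder_trees (Suc n). {y, n} \<in> T \<and> (\<forall>e\<in>T. n \<in> e \<longrightarrow> e = {y, n})}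
    \<le> tau_ladder n"
  unfolding tau_ladder_eq_card
proof (rule card_inj_on_le[OF _ _ finite_ladder_trees])
  let ?P = "{T \<in> ladder_trees (Suc n). {y, n} \<in> T \<and> (\<forall>e\<in>T. n \<in> e \<longrightarrow> e = {y, n})}"
  show "inj_on (\<lambda>T. T - {{y, n}}) ?P"
    by (rule inj_on_inverseI[where g = "insert {y, n}"]) auto
  show "(\<lambda>T. T - {{y, n}}) ` ?P \<subseteq> ladder_trees n"
    using ladder_tree_delete_leaf[OF n] by blast
qed

lemma card_ladder_trees_both_le:
  assumes n: "2 \<le> n"
  shows "card {T \<in> ladder_trees (Suc n). {n - 1, n} \<in> T \<and> {n - 2, n} \<in> T} \<le> tau_ladder n"
  unfolding tau_ladder_eq_card
proof (rule card_inj_on_le[OF _ _ finite_ladder_trees])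
  let ?D = "{T \<in> ladder_trees (Suc n). {n - 1, n} \<in> T \<and> {n - 2, n} \<in> T}"
  have no_chord: "{n - 1, n - 2} \<notin> T" if "T \<in> ?D" for T
  proof
    assume "{n - 1, n - 2} \<in> T"
    moreover have "distinct [n, n - 1, n - 2]" using n by auto
    ultimately have "has_cycle T"
      using that by (intro has_cycle_triangle[of n "n - 1" T "n - 2"]) (auto simp: insert_commute)
    then show False using that by (simp add: spanning_tree_def)
  qed
  show "inj_on (\<lambda>T. insert {n - 1, n - 2} (T - {{n - 1, n}, {n - 2, n}})) ?D"
  proof (rule inj_on_inverseI[where g = "\<lambda>S. insert {n - 1, n} (insert {n - 2, n} (S - {{n - 1, n - 2}}))"])
    fix T assume "T \<in> ?D"
    moreover have "{n - 1, n - 2} \<noteq> {n - 1, n}" "{n - 1, n - 2} \<noteq> {n - 2, n}"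
      using n by (auto simp: doubleton_eq_iff)
    ultimately show "insert {n - 1, n} (insert {n - 2, n}
        (insert {n - 1, n - 2} (T - {{n - 1, n}, {n - 2, n}}) - {{n - 1, n - 2}})) = T"
      using no_chord by auto
  qed
  show "(\<lambda>T. insert {n - 1, n - 2} (T - {{n - 1, n}, {n - 2, n}})) ` ?D \<subseteq> ladder_trees n"
    using ladder_tree_suppress_last[OF n] by blast
qed

lemma tau_ladder_Suc_le:
  assumes n: "2 \<le> n"
  shows "tau_ladder (Suc n) \<le> 3 * tau_ladder n"
proof -
  define leaf where "leaf y = {T \<in> ladder_trees (Suc n). {y, n} \<in> T \<and> (\<forall>e\<in>T. n \<in> e \<longrightarrow> e = {y, n})}"
    for y
  define both where "both = {T \<in> ladder_trees (Suc n). {n - 1, n} \<in> T \<and> {n - 2, n} \<in> T}"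
  have "ladder_trees (Suc n) \<subseteq> leaf (n - 1) \<union> leaf (n - 2) \<union> both"
    using ladder_tree_SucD(4)[OF n] unfolding leaf_def both_def by blast
  then have "tau_ladder (Suc n) \<le> card (leaf (n - 1) \<union> leaf (n - 2) \<union> both)"
    unfolding tau_ladder_eq_card
    by (rule card_mono[rotated]) (simp add: leaf_def both_def finite_ladder_trees)
  also have "\<dots> \<le> card (leaf (n - 1) \<union> leaf (n - 2)) + card both"
    by (rule card_Un_le)
  also have "\<dots> \<le> card (leaf (n - 1)) + card (leaf (n - 2)) + card both"
    using card_Un_le by (rule add_right_mono)
  also have "\<dots> \<le> 3 * tau_ladder n"
  proof -
    have "card (leaf (n - 1)) \<le> tau_ladder n" "card (leaf (n - 2)) \<le> tau_ladder n"
      unfolding leaf_def by (rule card_ladder_trees_leaf_le[OF n])+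
    moreover have "card both \<le> tau_ladder n"
      unfolding both_def by (rule card_ladder_trees_both_le[OF n])
    ultimately show ?thesis by linarith
  qed
  finally show ?thesis .
qed

lemma tau_ladder_add_bounds:
  assumes "2 \<le> m"
  shows "2 ^ k * tau_ladder m \<le> tau_ladder (m + k) \<and> tau_ladder (m + k) \<le> 3 ^ k * tau_ladder m"
proof (induction k)
  case 0
  then show ?case by simp
next
  case (Suc k)
  have "2 \<le> m + k" using assms by simp
  then have lower: "2 * tau_ladder (m + k) \<le> tau_ladder (m + Suc k)"
    and upper: "tau_ladder (m + Suc k) \<le> 3 * tau_ladder (m + k)"
    by (simp_all add: tau_ladder_Suc_ge tau_ladder_Suc_le)
  have "2 ^ Suc k * tau_ladder m \<le> 2 * tau_ladder (m + k)" using Suc.IH by simp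
  moreover have "3 * tau_ladder (m + k) \<le> 3 ^ Suc k * tau_ladder m" using Suc.IH by simp
  ultimately show ?case using lower upper by linarith
qed

theorem mainTheorem10:
  fixes n1 n2 :: nat
  assumes "n1 > n2" and "n2 > 1"
  shows "2 ^ (n1 - n2) * tau_ladder n2 \<le> tau_ladder n1 \<and>
         tau_ladder n1 \<le> 3 ^ (n1 - n2) * tau_ladder n2"
  using tau_ladder_add_bounds[of n2 "n1 - n2"] assms by simp

end
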